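(* Let $H:\mathbb R_+\to(0,1)$ be continuous and satisfy: (H1) there are constants $0<h_1<h_2<1$ with $h_1\le H_t\le h_2$ for all $t\ge0$; (H2) there are constants $D>0$, $\kappa\in(0,1]$ with $|H_t-H_s|\le D|t-s|^\kappa$ for all $t\ge s>0$. Let $Y$ be the multifractional Brownian motion with Hurst function $H$. Let $z(s)=s^{h_2}(\log^2s+1)^{1/2}$ for $s\ge1$ and $z(s)=1$ for $0\le s<1$, and let $K_2>0$ be a constant such that $\mathbb E(Y(t)-Y(s))^2\le K_2|t-s|^{2H_t}+K_2(H_t-H_s)^2z^2(s)$ for all $t\ge s\ge0$. Put $K_3=K_2^{1/2}(1+D^2)^{1/2}$, $h_3=\min\{h_1,\kappa\}$, $h_4=\max\{h_2,\kappa\}$, $h_5=h_4-h_3$. Let $a,b\in\mathbb R_+$ with $b-a\ge1$. Then: (a) for all $t,s\in[a,b]$ with $|t-s|\le1$, $\left(\mathbb E(Y(t)-Y(s))^2\right)^{1/2}\le K_3|t-s|^{h_3}z(b)$; (b) for all $t,s\in[a,b]$, $\left(\mathbb E(Y(t)-Y(s))^2\right)^{1/2}\le K_3|t-s|^{h_3}(b-a)^{h_5}z(b)$; (c) for all $t_1,t_2,s_1,s_2\in[a,b]$, \[ \left(\mathbb E(Y(t_1)-Y(t_2)-Y(s_1)+Y(s_2))^2\right)^{1/2}\le 2K_3\max(|t_1-s_1|,|t_2-s_2|)^{h_3}(b-a)^{h_5}z(b). \]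
   Context: The (harmonizable) multifractional Brownian motion with continuous functional parameter $H$ is $Y(t)=\int_{\mathbb R}\frac{e^{itu}-1}{|u|^{H_t+1/2}}\widetilde W(du)$, $t\ge0$, where $\widetilde W$ is the Fourier transform of real Gaussian white noise $W$ (the unique complex-valued random measure with $\int f\,dW=\int\widehat f\,d\widetilde W$ a.s. for all $f\in L^2(\mathbb R)$). Such a constant $K_2$ exists. *)

theory Defs
  imports "HOL-Probability.Probability"
begin

text \<open>Harmonizable kernel of the multifractional Brownian motion:
  u |-> (e^{itu} - 1) / |u|^{H_t + 1/2}  (set to 0 at u = 0, a null set).\<close>
definition mbm_kernel :: "(real \<Rightarrow> real) \<Rightarrow> real \<Rightarrow> real \<Rightarrow> complex" where
  "mbm_kernel H t u =
     (if u = 0 then 0 else (cis (t * u) - 1) / complex_of_real (\<bar>u\<bar> powr (H t + 1/2)))"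

text \<open>Covariance of the harmonizable mBm (Fourier transform normalised unitarily, so the
  control measure of the Fourier transformed white noise is Lebesgue measure):
  E[Y(t) Y(s)] = Re \<integral> k_t(u) conj(k_s(u)) du.\<close>
definition mbm_cov :: "(real \<Rightarrow> real) \<Rightarrow> real \<Rightarrow> real \<Rightarrow> real" where
  "mbm_cov H t s = Re (LINT u|lborel. mbm_kernel H t u * cnj (mbm_kernel H s u))"

text \<open>Y is (a version of) the multifractional Brownian motion with functional parameter H
  on the probability space M, indexed by t \<ge> 0: a centered real Gaussian process (every finite
  linear combination is centered normal, possibly degenerate, expressed via its characteristic
  function) with the covariance of the harmonizable representation.\<close>
definition is_mbm :: "'a measure \<Rightarrow> (real \<Rightarrow> real) \<Rightarrow> (real \<Rightarrow> 'a \<Rightarrow> real) \<Rightarrow> bool" where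
  "is_mbm M H Y \<longleftrightarrow>
     (\<forall>t\<ge>0. Y t \<in> borel_measurable M \<and> integrable M (\<lambda>\<omega>. (Y t \<omega>)\<^sup>2)
             \<and> (LINT \<omega>|M. Y t \<omega>) = 0) \<and>
     (\<forall>t\<ge>0. \<forall>s\<ge>0. (LINT \<omega>|M. Y t \<omega> * Y s \<omega>) = mbm_cov H t s) \<and>
     (\<forall>F c \<theta>. finite F \<longrightarrow> F \<subseteq> {0..} \<longrightarrow>
        char (distr M borel (\<lambda>\<omega>. \<Sum>t\<in>F. c t * Y t \<omega>)) \<theta> =
        exp (- complex_of_real ((LINT \<omega>|M. (\<Sum>t\<in>F. c t * Y t \<omega>)\<^sup>2) * \<theta>\<^sup>2 / 2)))"

definition zfun :: "real \<Rightarrow> real \<Rightarrow> real" where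
  "zfun h2 s = (if s \<ge> 1 then s powr h2 * sqrt ((ln s)\<^sup>2 + 1) else 1)"

end

theory Submission
  imports Defs
begin

text \<open>Write d = |t - s| and L = b - a \<ge> 1. Both exponents in the assumed variance bound,
  H(t) and (through the Hoelder condition) \<kappa>, lie in [h3, h4]; hence each power d^e is at most
  d^h3 when d \<le> 1 and at most d^h3 L^h5 when d \<le> L. As z is increasing and at least 1, the
  variance is then at most K2 (1 + D^2) g^2 z(b)^2 with g the relevant power bound, which gives
  (a) and (b). Part (c) follows from (b) applied to the two increments, by
  (x - y)^2 \<le> 2x^2 + 2y^2.\<close>

lemma hoelder_bound_extends_to_zero:
  fixes H :: "real \<Rightarrow> real"
  assumes "continuous_on {0..} H"
    and hoelder: "\<forall>t s. s > 0 \<and> t \<ge> s \<longrightarrow> \<bar>H t - H s\<bar> \<le> D * \<bar>t - s\<bar> powr \<kappa>"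
    and "0 \<le> s" "s \<le> t"
  shows "\<bar>H t - H s\<bar> \<le> D * \<bar>t - s\<bar> powr \<kappa>"
proof (cases "s = 0 \<and> t > 0")
  case True
  have "(H \<longlongrightarrow> H 0) (at 0 within {0..})"
    using assms(1) by (simp add: continuous_on_def)
  then have "(H \<longlongrightarrow> H 0) (at_right 0)"
    by (rule tendsto_within_subset) auto
  then have "((\<lambda>x. \<bar>H t - H x\<bar>) \<longlongrightarrow> \<bar>H t - H 0\<bar>) (at_right 0)"
    by (intro tendsto_intros)
  moreover have "((\<lambda>x. D * \<bar>t - x\<bar> powr \<kappa>) \<longlongrightarrow> D * \<bar>t - 0\<bar> powr \<kappa>) (at_right 0)"
    using True by (intro tendsto_intros) auto
  moreover have "\<forall>\<^sub>F x in at_right 0. \<bar>H t - H x\<bar> \<le> D * \<bar>t - x\<bar> powr \<kappa>"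
    using eventually_at_right_real[of 0 t] True hoelder by (auto elim!: eventually_mono)
  ultimately show ?thesis
    using True by (auto intro: tendsto_le[OF trivial_limit_at_right_real])
next
  case False
  then show ?thesis using hoelder assms(3,4) by (cases "s = 0") auto
qed

lemma zfun_ge_1:
  assumes "0 \<le> h"
  shows "1 \<le> zfun h s"
proof (cases "1 \<le> s")
  case True
  have "1 * 1 \<le> s powr h * sqrt ((ln s)\<^sup>2 + 1)"
    using True assms by (intro mult_mono ge_one_powr_ge_zero) auto
  then show ?thesis using True by (simp add: zfun_def)
qed (simp add: zfun_def)

lemma zfun_mono:
  assumes "0 \<le> h" "s \<le> b"
  shows "zfun h s \<le> zfun h b"
proof (cases "1 \<le> s")
  case True
  have "(ln s)\<^sup>2 \<le> (ln b)\<^sup>2"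
    using True assms(2) by (intro power_mono) auto
  then have "s powr h * sqrt ((ln s)\<^sup>2 + 1) \<le> b powr h * sqrt ((ln b)\<^sup>2 + 1)"
    using True assms by (intro mult_mono powr_mono2) auto
  then show ?thesis using True assms(2) by (simp add: zfun_def)
next
  case False
  then show ?thesis using zfun_ge_1[OF assms(1), of b] by (simp add: zfun_def)
qed

lemma powr_le_powr_scaled:
  fixes d e p q L :: real
  assumes "0 \<le> d" "d \<le> L" "1 \<le> L" "p \<le> e" "e \<le> q"
  shows "d powr e \<le> d powr p * L powr (q - p)"
proof (cases "d \<le> 1")
  case True
  have "d powr e \<le> d powr p * 1"
    using True assms by (simp add: powr_mono')
  also have "\<dots> \<le> d powr p * L powr (q - p)"
    using assms by (intro mult_left_mono ge_one_powr_ge_zero) auto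
  finally show ?thesis .
next
  case False
  have "d powr e \<le> d powr q" using False assms by (intro powr_mono) auto
  also have "\<dots> = d powr p * d powr (q - p)" by (simp flip: powr_add)
  also have "\<dots> \<le> d powr p * L powr (q - p)"
    using assms False by (intro mult_left_mono powr_mono2) auto
  finally show ?thesis .
qed

lemma sqrt_variance_bound:
  fixes V K D d h \<kappa> \<delta> g z Z :: real
  assumes V: "V \<le> K * d powr (2 * h) + K * \<delta>\<^sup>2 * z\<^sup>2"
    and "0 \<le> K" "0 \<le> D" "0 \<le> z" "z \<le> Z" "1 \<le> Z"
    and "\<bar>\<delta>\<bar> \<le> D * d powr \<kappa>" "d powr h \<le> g" "d powr \<kappa> \<le> g"
  shows "sqrt V \<le> sqrt K * sqrt (1 + D\<^sup>2) * g * Z"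
proof -
  have g: "0 \<le> g"
    using order_trans[OF powr_ge_zero assms(8)] .
  have "g * 1 \<le> g * Z"
    using mult_left_mono[OF assms(6) g] .
  then have "d powr h \<le> g * Z"
    using assms(8) by linarith
  then have "(d powr h)\<^sup>2 \<le> (g * Z)\<^sup>2"
    by (intro power_mono) simp_all
  moreover have "d powr (2 * h) = (d powr h)\<^sup>2"
    by (simp add: power2_eq_square flip: powr_add)
  ultimately have first: "d powr (2 * h) \<le> g\<^sup>2 * Z\<^sup>2"
    by (simp add: power_mult_distrib)
  have "D * d powr \<kappa> \<le> D * g"
    using mult_left_mono[OF assms(9,3)] .
  then have "\<bar>\<delta>\<bar> \<le> D * g"
    using assms(7) by linarith
  then have "\<bar>\<delta>\<bar> * z \<le> D * g * Z"
    using assms(3-5) g by (intro mult_mono) simp_all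
  then have "(\<bar>\<delta>\<bar> * z)\<^sup>2 \<le> (D * g * Z)\<^sup>2"
    using assms(4) by (intro power_mono) simp_all
  then have second: "\<delta>\<^sup>2 * z\<^sup>2 \<le> D\<^sup>2 * g\<^sup>2 * Z\<^sup>2"
    by (simp add: power_mult_distrib)
  have "V \<le> K * d powr (2 * h) + K * (\<delta>\<^sup>2 * z\<^sup>2)"
    using V by (simp add: mult.assoc)
  also have "\<dots> \<le> K * (g\<^sup>2 * Z\<^sup>2) + K * (D\<^sup>2 * g\<^sup>2 * Z\<^sup>2)"
    by (intro add_mono mult_left_mono first second assms(2))
  also have "\<dots> = (sqrt K * sqrt (1 + D\<^sup>2) * g * Z)\<^sup>2"
    using assms(2) by (simp add: power_mult_distrib algebra_simps)
  finally show ?thesis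
    using assms(2,3,6) g by (intro real_le_lsqrt) simp_all
qed

lemma diff_square_le: "((x::real) - y)\<^sup>2 \<le> 2 * x\<^sup>2 + 2 * y\<^sup>2"
proof -
  have "2 * x\<^sup>2 + 2 * y\<^sup>2 - (x - y)\<^sup>2 = (x + y)\<^sup>2"
    by (simp add: power2_eq_square algebra_simps)
  then show ?thesis using zero_le_power2[of "x + y"] by linarith
qed

lemma integrable_diff_square:
  fixes X Z :: "'a \<Rightarrow> real"
  assumes "X \<in> borel_measurable M" "Z \<in> borel_measurable M"
    and "integrable M (\<lambda>\<omega>. (X \<omega>)\<^sup>2)" "integrable M (\<lambda>\<omega>. (Z \<omega>)\<^sup>2)"
  shows "integrable M (\<lambda>\<omega>. (X \<omega> - Z \<omega>)\<^sup>2)"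
  by (rule Bochner_Integration.integrable_bound[where f = "\<lambda>\<omega>. 2 * (X \<omega>)\<^sup>2 + 2 * (Z \<omega>)\<^sup>2"])
     (use assms diff_square_le in auto)

lemma integral_square_le_of_sqrt_le:
  fixes X :: "'a \<Rightarrow> real"
  assumes "sqrt (LINT \<omega>|M. (X \<omega>)\<^sup>2) \<le> C"
  shows "(LINT \<omega>|M. (X \<omega>)\<^sup>2) \<le> C\<^sup>2"
proof -
  have nonneg: "0 \<le> (LINT \<omega>|M. (X \<omega>)\<^sup>2)"
    by (rule Bochner_Integration.integral_nonneg) simp
  then have "(sqrt (LINT \<omega>|M. (X \<omega>)\<^sup>2))\<^sup>2 \<le> C\<^sup>2"
    by (intro power_mono assms real_sqrt_ge_zero)
  with nonneg show ?thesis by simp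
qed

lemma sqrt_integral_diff_square_le:
  fixes X Z :: "'a \<Rightarrow> real"
  assumes "X \<in> borel_measurable M" "Z \<in> borel_measurable M"
    and "integrable M (\<lambda>\<omega>. (X \<omega>)\<^sup>2)" "integrable M (\<lambda>\<omega>. (Z \<omega>)\<^sup>2)"
    and "sqrt (LINT \<omega>|M. (X \<omega>)\<^sup>2) \<le> C" "sqrt (LINT \<omega>|M. (Z \<omega>)\<^sup>2) \<le> C"
  shows "sqrt (LINT \<omega>|M. (X \<omega> - Z \<omega>)\<^sup>2) \<le> 2 * C"
proof -
  have "(LINT \<omega>|M. (X \<omega> - Z \<omega>)\<^sup>2) \<le> (LINT \<omega>|M. 2 * (X \<omega>)\<^sup>2 + 2 * (Z \<omega>)\<^sup>2)"
    using assms diff_square_le by (intro integral_mono integrable_diff_square) auto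
  also have "\<dots> = 2 * (LINT \<omega>|M. (X \<omega>)\<^sup>2) + 2 * (LINT \<omega>|M. (Z \<omega>)\<^sup>2)"
    using assms by simp
  also have "\<dots> \<le> 2 * C\<^sup>2 + 2 * C\<^sup>2"
    using assms(5,6) by (intro add_mono mult_left_mono integral_square_le_of_sqrt_le) simp_all
  also have "\<dots> = (2 * C)\<^sup>2"
    by (simp add: power2_eq_square)
  finally have "(LINT \<omega>|M. (X \<omega> - Z \<omega>)\<^sup>2) \<le> (2 * C)\<^sup>2" .
  moreover have "0 \<le> (LINT \<omega>|M. (Z \<omega>)\<^sup>2)"
    by (rule Bochner_Integration.integral_nonneg) simp
  then have "0 \<le> C"
    using assms(6) by (meson order_trans real_sqrt_ge_zero)
  ultimately show ?thesis
    by (intro real_le_lsqrt) simp_all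
qed

lemma is_mbm_increment:
  assumes "is_mbm M H Y" "0 \<le> t" "0 \<le> s"
  shows "(\<lambda>\<omega>. Y t \<omega> - Y s \<omega>) \<in> borel_measurable M"
    and "integrable M (\<lambda>\<omega>. (Y t \<omega> - Y s \<omega>)\<^sup>2)"
proof -
  have "Y t \<in> borel_measurable M" "Y s \<in> borel_measurable M"
    and "integrable M (\<lambda>\<omega>. (Y t \<omega>)\<^sup>2)" "integrable M (\<lambda>\<omega>. (Y s \<omega>)\<^sup>2)"
    using assms unfolding is_mbm_def by blast+
  then show "(\<lambda>\<omega>. Y t \<omega> - Y s \<omega>) \<in> borel_measurable M"
    and "integrable M (\<lambda>\<omega>. (Y t \<omega> - Y s \<omega>)\<^sup>2)"
    by (auto intro: integrable_diff_square)
qed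

lemma increment_rms_le:
  fixes H :: "real \<Rightarrow> real" and Y :: "real \<Rightarrow> 'a \<Rightarrow> real"
  assumes Hcont: "continuous_on {0..} H"
    and Hbounds: "\<forall>t\<ge>0. h1 \<le> H t \<and> H t \<le> h2"
    and hoelder: "\<forall>t s. s > 0 \<and> t \<ge> s \<longrightarrow> \<bar>H t - H s\<bar> \<le> D * \<bar>t - s\<bar> powr \<kappa>"
    and variance: "\<forall>t s. s \<ge> 0 \<and> t \<ge> s \<longrightarrow>
               (LINT \<omega>|M. (Y t \<omega> - Y s \<omega>)\<^sup>2)
                 \<le> K2 * \<bar>t - s\<bar> powr (2 * H t) + K2 * (H t - H s)\<^sup>2 * (zfun h2 s)\<^sup>2"
    and "0 \<le> K2" "0 \<le> D" "0 \<le> h2" "0 \<le> a" and ts: "t \<in> {a..b}" "s \<in> {a..b}"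
    and powers: "\<forall>e\<in>{min h1 \<kappa>..max h2 \<kappa>}. \<bar>t - s\<bar> powr e \<le> g"
  shows "sqrt (LINT \<omega>|M. (Y t \<omega> - Y s \<omega>)\<^sup>2) \<le> sqrt K2 * sqrt (1 + D\<^sup>2) * g * zfun h2 b"
proof -
  have ordered: "sqrt (LINT \<omega>|M. (Y t \<omega> - Y s \<omega>)\<^sup>2) \<le> sqrt K2 * sqrt (1 + D\<^sup>2) * g * zfun h2 b"
    if "a \<le> s" "s \<le> t" "t \<le> b" "\<forall>e\<in>{min h1 \<kappa>..max h2 \<kappa>}. \<bar>t - s\<bar> powr e \<le> g" for t s
  proof (rule sqrt_variance_bound[where h = "H t" and \<kappa> = \<kappa>])
    show "(LINT \<omega>|M. (Y t \<omega> - Y s \<omega>)\<^sup>2)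
        \<le> K2 * \<bar>t - s\<bar> powr (2 * H t) + K2 * (H t - H s)\<^sup>2 * (zfun h2 s)\<^sup>2"
      using variance that \<open>0 \<le> a\<close> by simp
    show "\<bar>H t - H s\<bar> \<le> D * \<bar>t - s\<bar> powr \<kappa>"
      using hoelder_bound_extends_to_zero[OF Hcont hoelder] that \<open>0 \<le> a\<close> by simp
    have "min h1 \<kappa> \<le> H t \<and> H t \<le> max h2 \<kappa>"
      using Hbounds[rule_format, of t] that \<open>0 \<le> a\<close> by auto
    then show "\<bar>t - s\<bar> powr H t \<le> g" "\<bar>t - s\<bar> powr \<kappa> \<le> g"
      using that(4) by auto
    show "zfun h2 s \<le> zfun h2 b" "1 \<le> zfun h2 b" "0 \<le> zfun h2 s"
      using zfun_mono[of h2 s b] zfun_ge_1[of h2] \<open>0 \<le> h2\<close> that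
      by (auto intro: order_trans[of 0 1])
  qed (use \<open>0 \<le> K2\<close> \<open>0 \<le> D\<close> in auto)
  show ?thesis
  proof (cases "s \<le> t")
    case True
    then show ?thesis using ordered[of s t] ts powers by auto
  next
    case False
    then show ?thesis
      using ordered[of t s] ts powers by (auto simp: abs_minus_commute power2_commute)
  qed
qed

lemma rms_rectangular_increment_le:
  fixes Y :: "real \<Rightarrow> 'a \<Rightarrow> real"
  assumes "is_mbm M H Y" "A \<subseteq> {0..}" "0 \<le> C" "0 \<le> h"
    and increments: "\<forall>t\<in>A. \<forall>s\<in>A. sqrt (LINT \<omega>|M. (Y t \<omega> - Y s \<omega>)\<^sup>2) \<le> C * \<bar>t - s\<bar> powr h"
    and "t1 \<in> A" "t2 \<in> A" "s1 \<in> A" "s2 \<in> A"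
  shows "sqrt (LINT \<omega>|M. (Y t1 \<omega> - Y t2 \<omega> - Y s1 \<omega> + Y s2 \<omega>)\<^sup>2)
    \<le> 2 * C * (max \<bar>t1 - s1\<bar> \<bar>t2 - s2\<bar>) powr h"
proof -
  define m where "m = max \<bar>t1 - s1\<bar> \<bar>t2 - s2\<bar>"
  have bound: "sqrt (LINT \<omega>|M. (Y t \<omega> - Y s \<omega>)\<^sup>2) \<le> C * m powr h"
    if "t \<in> A" "s \<in> A" "\<bar>t - s\<bar> \<le> m" for t s
    using increments that \<open>0 \<le> C\<close> \<open>0 \<le> h\<close>
    by (meson abs_ge_zero mult_left_mono order_trans powr_mono2)
  have "(\<lambda>\<omega>. (Y t1 \<omega> - Y t2 \<omega> - Y s1 \<omega> + Y s2 \<omega>)\<^sup>2)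
      = (\<lambda>\<omega>. (Y t1 \<omega> - Y s1 \<omega> - (Y t2 \<omega> - Y s2 \<omega>))\<^sup>2)"
    by (intro ext) (simp add: algebra_simps)
  moreover have "sqrt (LINT \<omega>|M. (Y t1 \<omega> - Y s1 \<omega> - (Y t2 \<omega> - Y s2 \<omega>))\<^sup>2) \<le> 2 * (C * m powr h)"
    using assms(2,6-9) bound[of t1 s1] bound[of t2 s2]
    by (intro sqrt_integral_diff_square_le is_mbm_increment[OF assms(1)])
       (auto simp: m_def)
  ultimately show ?thesis
    by (simp add: m_def mult.assoc)
qed

theorem lemma2:
  fixes M :: "'a measure" and H :: "real \<Rightarrow> real" and Y :: "real \<Rightarrow> 'a \<Rightarrow> real"
    and h1 h2 D \<kappa> K2 a b :: real
  assumes Hcont: "continuous_on {0..} H"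
    and Hrange: "\<forall>t\<ge>0. 0 < H t \<and> H t < 1"
    and H1: "0 < h1" "h1 < h2" "h2 < 1" "\<forall>t\<ge>0. h1 \<le> H t \<and> H t \<le> h2"
    and H2: "D > 0" "0 < \<kappa>" "\<kappa> \<le> 1"
            "\<forall>t s. s > 0 \<and> t \<ge> s \<longrightarrow> \<bar>H t - H s\<bar> \<le> D * \<bar>t - s\<bar> powr \<kappa>"
    and P: "prob_space M"
    and Ymbm: "is_mbm M H Y"
    and K2: "K2 > 0"
            "\<forall>t s. s \<ge> 0 \<and> t \<ge> s \<longrightarrow>
               (LINT \<omega>|M. (Y t \<omega> - Y s \<omega>)\<^sup>2)
                 \<le> K2 * \<bar>t - s\<bar> powr (2 * H t) + K2 * (H t - H s)\<^sup>2 * (zfun h2 s)\<^sup>2"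
    and ab: "a \<ge> 0" "b - a \<ge> 1"
  shows
    "(\<forall>t\<in>{a..b}. \<forall>s\<in>{a..b}. \<bar>t - s\<bar> \<le> 1 \<longrightarrow>
        sqrt (LINT \<omega>|M. (Y t \<omega> - Y s \<omega>)\<^sup>2)
          \<le> sqrt K2 * sqrt (1 + D\<^sup>2) * \<bar>t - s\<bar> powr (min h1 \<kappa>) * zfun h2 b)
   \<and> (\<forall>t\<in>{a..b}. \<forall>s\<in>{a..b}.
        sqrt (LINT \<omega>|M. (Y t \<omega> - Y s \<omega>)\<^sup>2)
          \<le> sqrt K2 * sqrt (1 + D\<^sup>2) * \<bar>t - s\<bar> powr (min h1 \<kappa>)
             * (b - a) powr (max h2 \<kappa> - min h1 \<kappa>) * zfun h2 b)
   \<and> (\<forall>t1\<in>{a..b}. \<forall>t2\<in>{a..b}. \<forall>s1\<in>{a..b}. \<forall>s2\<in>{a..b}.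
        sqrt (LINT \<omega>|M. (Y t1 \<omega> - Y t2 \<omega> - Y s1 \<omega> + Y s2 \<omega>)\<^sup>2)
          \<le> 2 * (sqrt K2 * sqrt (1 + D\<^sup>2)) * (max \<bar>t1 - s1\<bar> \<bar>t2 - s2\<bar>) powr (min h1 \<kappa>)
             * (b - a) powr (max h2 \<kappa> - min h1 \<kappa>) * zfun h2 b)"
proof -
  define h3 where "h3 = min h1 \<kappa>"
  define h4 where "h4 = max h2 \<kappa>"
  define K3 where "K3 = sqrt K2 * sqrt (1 + D\<^sup>2)"
  have incr: "sqrt (LINT \<omega>|M. (Y t \<omega> - Y s \<omega>)\<^sup>2) \<le> K3 * g * zfun h2 b"
    if "t \<in> {a..b}" "s \<in> {a..b}" "\<forall>e\<in>{h3..h4}. \<bar>t - s\<bar> powr e \<le> g" for t s g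
    using increment_rms_le[OF Hcont H1(4) H2(4) K2(2) _ _ _ ab(1) that[unfolded h3_def h4_def]]
      K2(1) H1 H2(1) by (simp add: K3_def)
  have part_a: "sqrt (LINT \<omega>|M. (Y t \<omega> - Y s \<omega>)\<^sup>2) \<le> K3 * \<bar>t - s\<bar> powr h3 * zfun h2 b"
    if "t \<in> {a..b}" "s \<in> {a..b}" "\<bar>t - s\<bar> \<le> 1" for t s
  proof -
    have "\<forall>e\<in>{h3..h4}. \<bar>t - s\<bar> powr e \<le> \<bar>t - s\<bar> powr h3"
      using that(3) by (auto intro: powr_mono')
    from incr[OF that(1,2) this] show ?thesis .
  qed
  have part_b: "\<forall>t\<in>{a..b}. \<forall>s\<in>{a..b}. sqrt (LINT \<omega>|M. (Y t \<omega> - Y s \<omega>)\<^sup>2)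
      \<le> (K3 * (b - a) powr (h4 - h3) * zfun h2 b) * \<bar>t - s\<bar> powr h3"
  proof (intro ballI)
    fix t s assume ts: "t \<in> {a..b}" "s \<in> {a..b}"
    then have "\<forall>e\<in>{h3..h4}. \<bar>t - s\<bar> powr e \<le> \<bar>t - s\<bar> powr h3 * (b - a) powr (h4 - h3)"
      using ab by (auto intro!: powr_le_powr_scaled)
    from incr[OF ts this] show "sqrt (LINT \<omega>|M. (Y t \<omega> - Y s \<omega>)\<^sup>2)
        \<le> (K3 * (b - a) powr (h4 - h3) * zfun h2 b) * \<bar>t - s\<bar> powr h3"
      by (simp only: ac_simps)
  qed
  have part_c: "sqrt (LINT \<omega>|M. (Y t1 \<omega> - Y t2 \<omega> - Y s1 \<omega> + Y s2 \<omega>)\<^sup>2)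
      \<le> 2 * (K3 * (b - a) powr (h4 - h3) * zfun h2 b) * (max \<bar>t1 - s1\<bar> \<bar>t2 - s2\<bar>) powr h3"
    if "t1 \<in> {a..b}" "t2 \<in> {a..b}" "s1 \<in> {a..b}" "s2 \<in> {a..b}" for t1 t2 s1 s2
    using K2(1) zfun_ge_1[of h2 b] H1 H2(2) ab
    by (intro rms_rectangular_increment_le[OF Ymbm _ _ _ part_b that])
       (auto simp: K3_def h3_def)
  show ?thesis
    using part_a part_b part_c by (simp add: K3_def h3_def h4_def ac_simps)
qed

end
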